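(* Let $U_n\subset C^n([a,b],\mathbb{K})$ ($a<b$) be a subspace of dimension $n+1$ and let $p_{n,0},\dots,p_{n,n}$ be a Bernstein basis of $U_n$ for $\{a,b\}$ which is locally non-negative at $\{a,b\}$. Then there exists $\delta>0$ such that $p_{n,k}'(x)<0$ for all $x\in[b-\delta,b)$ and all $k=0,\dots,n-1$, while $p_{n,k}'(x)>0$ for all $x\in(a,a+\delta]$ and all $k=1,\dots,n$. Consequently, if moreover $f_0\in U_n$ is strictly positive and $D_{f_0}U_n$ has a Bernstein basis $q_{n-1,0},\dots,q_{n-1,n-1}$ for $\{a,b\}$ which is locally non-negative at $\{a,b\}$, then the numbers $$c_k=\frac{1}{f_0(a)}\lim_{x\downarrow a}\frac{p_{n,k}'(x)}{q_{n-1,k-1}(x)}\ (k=1,\dots,n),\qquad d_k=\frac{1}{f_0(b)}\lim_{x\uparrow b}\frac{p_{n,k}'(x)}{q_{n-1,k}(x)}\ (k=0,\dots,n-1)$$ satisfy $c_k>0$ for $k=1,\dots,n$ and $d_k<0$ for $k=0,\dots,n-1$.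
   Context: A function $f\in C^m([a,b],\mathbb{K})$ has a zero of order $k$ at $c$ if $f(c)=\dots=f^{(k-1)}(c)=0$ and $f^{(k)}(c)\ne0$ (one-sided derivatives at endpoints). For an $(m+1)$-dimensional space $V\subset C^m([a,b],\mathbb{K})$, a Bernstein basis for $\{a,b\}$ is a system $p_{m,0},\dots,p_{m,m}$ in $V$ such that each $p_{m,k}$ has a zero of order exactly $k$ at $a$ and of order exactly $m-k$ at $b$. Such a basis is locally non-negative at $\{a,b\}$ if its functions are real-valued and there is $\delta>0$ with $p_{m,k}(x)\ge0$ for all $k$ and all $x\in[a,a+\delta)\cup(b-\delta,b]$. For strictly positive $f_0\in U_n$, $D_{f_0}U_n:=\{\frac{d}{dx}(f/f_0):f\in U_n\}$. (The limits defining $c_k,d_k$ exist and are non-zero.) *)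

theory Defs
  imports "HOL-Analysis.Analysis"
begin

text \<open>Functions on [a,b] are modelled as total functions real => 'a; only their values
  on [a,b] matter.  The field K is modelled by a type 'a :: real_normed_field
  (this covers K = real and K = complex).\<close>

definition has_derivs_on :: "nat \<Rightarrow> real \<Rightarrow> real \<Rightarrow> (real \<Rightarrow> 'a::real_normed_vector)
    \<Rightarrow> (nat \<Rightarrow> real \<Rightarrow> 'a) \<Rightarrow> bool" where
  "has_derivs_on m a b f D \<longleftrightarrow>
     (\<forall>x\<in>{a..b}. D 0 x = f x) \<and>
     (\<forall>j<m. \<forall>x\<in>{a..b}. (D j has_vector_derivative D (Suc j) x) (at x within {a..b})) \<and>
     (\<forall>j\<le>m. continuous_on {a..b} (D j))"

definition Cm_on :: "nat \<Rightarrow> real \<Rightarrow> real \<Rightarrow> (real \<Rightarrow> 'a::real_normed_vector) \<Rightarrow> bool" where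
  "Cm_on m a b f \<longleftrightarrow> (\<exists>D. has_derivs_on m a b f D)"

definition zero_of_order :: "nat \<Rightarrow> real \<Rightarrow> real \<Rightarrow> (real \<Rightarrow> 'a::real_normed_vector)
    \<Rightarrow> real \<Rightarrow> nat \<Rightarrow> bool" where
  "zero_of_order m a b f c k \<longleftrightarrow> k \<le> m \<and>
     (\<exists>D. has_derivs_on m a b f D \<and> (\<forall>j<k. D j c = 0) \<and> D k c \<noteq> 0)"

definition fun_subspace :: "(real \<Rightarrow> 'a::field) set \<Rightarrow> bool" where
  "fun_subspace V \<longleftrightarrow> (\<lambda>x. 0) \<in> V \<and>
     (\<forall>f\<in>V. \<forall>g\<in>V. (\<lambda>x. f x + g x) \<in> V) \<and>
     (\<forall>c. \<forall>f\<in>V. (\<lambda>x. c * f x) \<in> V)"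

definition dim_on :: "real \<Rightarrow> real \<Rightarrow> (real \<Rightarrow> 'a::field) set \<Rightarrow> nat \<Rightarrow> bool" where
  "dim_on a b V d \<longleftrightarrow> (\<exists>B. (\<forall>i<d. B i \<in> V) \<and>
     (\<forall>c. (\<forall>x\<in>{a..b}. (\<Sum>i<d. c i * B i x) = 0) \<longrightarrow> (\<forall>i<d. c i = 0)) \<and>
     (\<forall>f\<in>V. \<exists>c. \<forall>x\<in>{a..b}. f x = (\<Sum>i<d. c i * B i x)))"

definition bernstein_basis :: "nat \<Rightarrow> real \<Rightarrow> real \<Rightarrow> (real \<Rightarrow> 'a::real_normed_vector) set
    \<Rightarrow> (nat \<Rightarrow> real \<Rightarrow> 'a) \<Rightarrow> bool" where
  "bernstein_basis m a b V P \<longleftrightarrow>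
     (\<forall>k\<le>m. P k \<in> V \<and> zero_of_order m a b (P k) a k \<and> zero_of_order m a b (P k) b (m - k))"

definition locally_nonneg :: "nat \<Rightarrow> real \<Rightarrow> real \<Rightarrow> (nat \<Rightarrow> real \<Rightarrow> 'a::real_normed_algebra_1) \<Rightarrow> bool" where
  "locally_nonneg m a b P \<longleftrightarrow>
     (\<forall>k\<le>m. \<forall>x\<in>{a..b}. P k x \<in> \<real>) \<and>
     (\<exists>\<delta>>0. \<forall>k\<le>m. \<forall>x\<in>{a..b}. (x < a + \<delta> \<or> b - \<delta> < x) \<longrightarrow> (\<exists>r\<ge>0. P k x = of_real r))"

definition D_op :: "real \<Rightarrow> real \<Rightarrow> (real \<Rightarrow> real) \<Rightarrow> (real \<Rightarrow> 'a::real_normed_field) set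
    \<Rightarrow> (real \<Rightarrow> 'a) set" where
  "D_op a b f0 U = {g. \<exists>f\<in>U. \<forall>x\<in>{a..b}.
      ((\<lambda>y. f y / of_real (f0 y)) has_vector_derivative g x) (at x within {a..b})}"

end

theory Submission
  imports Defs
begin

(* A locally non-negative Bernstein function is real-valued, and so are all its derivatives on
   [a,b], since the reals are a closed subset of the scalar field; this reduces everything to real
   C^m functions.  If such an f has a zero of order j at b, iterating the mean value theorem shows
   that f has the sign of (-1)^j f^(j)(b) just left of b.  Local non-negativity of p_{n,k} therefore
   forces (-1)^(n-k) p_{n,k}^(n-k)(b) > 0, and the same sign rule applied to p_{n,k}', which has a
   zero of order n-k-1 at b, makes p_{n,k}' negative near b.  Iterated l'Hopital identifies the
   limit of p_{n,k}' / q_{n-1,k} with the quotient of the leading derivatives at b, whose sign is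
   now known.  The endpoint a is reduced to b by the reflection x |-> a + b - x. *)

section \<open>Real-valued derivative chains\<close>

lemma closed_Reals: "closed (\<real> :: 'a::real_normed_algebra_1 set)"
proof -
  have "complete (range (of_real :: real \<Rightarrow> 'a))"
    by (rule complete_isometric_image[of 1])
      (auto simp: subspace_UNIV bounded_linear_of_real complete_UNIV)
  then show ?thesis
    by (simp add: Reals_def complete_imp_closed)
qed

lemma has_vector_derivative_imp_tendsto_quotient:
  assumes "(f has_vector_derivative v) (at x within S)"
  shows "((\<lambda>y. (f y - f x) /\<^sub>R (y - x)) \<longlongrightarrow> v) (at x within S)"
proof -
  have "((\<lambda>y. norm (f y - f x - (y - x) *\<^sub>R v) / norm (y - x)) \<longlongrightarrow> 0) (at x within S)"
    using assms by (simp add: has_vector_derivative_def has_derivative_iff_norm)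
  moreover have "\<forall>\<^sub>F y in at x within S.
      norm (f y - f x - (y - x) *\<^sub>R v) / norm (y - x) = norm ((f y - f x) /\<^sub>R (y - x) - v)"
    unfolding eventually_at_filter
  proof (intro always_eventually allI impI)
    fix y assume "y \<noteq> x"
    then have "(f y - f x) /\<^sub>R (y - x) - v = (f y - f x - (y - x) *\<^sub>R v) /\<^sub>R (y - x)"
      by (simp add: scaleR_diff_right)
    then show "norm (f y - f x - (y - x) *\<^sub>R v) / norm (y - x) = norm ((f y - f x) /\<^sub>R (y - x) - v)"
      by (simp add: divide_inverse_commute)
  qed
  ultimately have "((\<lambda>y. norm ((f y - f x) /\<^sub>R (y - x) - v)) \<longlongrightarrow> 0) (at x within S)"
    by (rule Lim_transform_eventually)
  then show ?thesis
    by (simp add: tendsto_norm_zero_iff LIM_zero_cancel)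
qed

lemma has_vector_derivative_in_Reals:
  fixes f :: "real \<Rightarrow> 'a::real_normed_algebra_1"
  assumes "(f has_vector_derivative v) (at x within S)" "at x within S \<noteq> bot"
    and "x \<in> S" "\<forall>y\<in>S. f y \<in> \<real>"
  shows "v \<in> \<real>"
proof (rule Lim_in_closed_set[OF closed_Reals _ assms(2)
      has_vector_derivative_imp_tendsto_quotient[OF assms(1)]])
  show "\<forall>\<^sub>F y in at x within S. (f y - f x) /\<^sub>R (y - x) \<in> \<real>"
    using assms(3,4) unfolding eventually_at_filter
    by (auto intro!: always_eventually simp: scaleR_conv_of_real)
qed

lemma has_real_derivative_iff_of_real:
  "((\<lambda>y. of_real (f y) :: 'a::real_normed_algebra_1) has_vector_derivative of_real d) (at x within S)
    \<longleftrightarrow> (f has_real_derivative d) (at x within S)"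
proof -
  have "norm (of_real (f y) - of_real (f x) - (y - x) *\<^sub>R (of_real d :: 'a)) = \<bar>f y - f x - d * (y - x)\<bar>"
    for y
    by (metis mult.commute norm_of_real of_real_diff of_real_mult scaleR_conv_of_real)
  then show ?thesis
    by (simp add: has_vector_derivative_def has_field_derivative_def has_derivative_iff_norm
        bounded_linear_scaleR_left bounded_linear_mult_right)
qed

lemma has_derivs_on_cong:
  assumes "\<forall>x\<in>{a..b}. f x = g x" "\<forall>j\<le>m. \<forall>x\<in>{a..b}. D j x = E j x"
  shows "has_derivs_on m a b f D \<longleftrightarrow> has_derivs_on m a b g E"
proof -
  have "(D j has_vector_derivative D (Suc j) x) (at x within {a..b}) \<longleftrightarrow>
      (E j has_vector_derivative E (Suc j) x) (at x within {a..b})" if "j < m" "x \<in> {a..b}" for j x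
  proof -
    have "\<forall>y\<in>{a..b}. D j y = E j y" "D (Suc j) x = E (Suc j) x"
      using that assms(2) by auto
    then show ?thesis
      using has_vector_derivative_transform[OF \<open>x \<in> {a..b}\<close>, of "D j" "E j"]
        has_vector_derivative_transform[OF \<open>x \<in> {a..b}\<close>, of "E j" "D j"] by auto
  qed
  moreover have "continuous_on {a..b} (D j) \<longleftrightarrow> continuous_on {a..b} (E j)" if "j \<le> m" for j
    using that assms(2) by (intro continuous_on_cong) auto
  ultimately show ?thesis
    using assms unfolding has_derivs_on_def by auto
qed

lemma has_derivs_on_of_real_iff:
  "has_derivs_on m a b (\<lambda>x. of_real (f x) :: 'a::real_normed_div_algebra) (\<lambda>j x. of_real (E j x))
    \<longleftrightarrow> has_derivs_on m a b f E"
  by (simp add: has_derivs_on_def has_real_derivative_iff_of_real continuous_on_def tendsto_of_real_iff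
      flip: has_real_derivative_iff_has_vector_derivative)

lemma has_derivs_on_real_valuedE:
  fixes g :: "real \<Rightarrow> 'a::real_normed_div_algebra"
  assumes D: "has_derivs_on m a b g D" and "a < b" and g: "\<forall>x\<in>{a..b}. g x \<in> \<real>"
  obtains E where "\<forall>j\<le>m. \<forall>x\<in>{a..b}. D j x = of_real (E j x)"
    "has_derivs_on m a b g (\<lambda>j x. of_real (E j x))" "has_derivs_on m a b (E 0) E"
proof -
  have real: "\<forall>x\<in>{a..b}. D j x \<in> \<real>" if "j \<le> m" for j
    using that
  proof (induction j)
    case 0
    then show ?case using D g unfolding has_derivs_on_def by auto
  next
    case (Suc j)
    show ?case
    proof
      fix x assume x: "x \<in> {a..b}"
      have "(D j has_vector_derivative D (Suc j) x) (at x within {a..b})"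
        using D Suc.prems x unfolding has_derivs_on_def by auto
      then show "D (Suc j) x \<in> \<real>"
        using Suc \<open>a < b\<close> x
        by (intro has_vector_derivative_in_Reals) (auto simp: trivial_limit_within islimpt_Icc)
    qed
  qed
  define E where "E j x = (SOME r. D j x = of_real r)" for j x
  have DE: "\<forall>j\<le>m. \<forall>x\<in>{a..b}. D j x = of_real (E j x)"
    unfolding E_def by (metis (mono_tags, lifting) Reals_cases real someI_ex)
  have g_E: "\<forall>x\<in>{a..b}. g x = of_real (E 0 x)"
    using D DE unfolding has_derivs_on_def by auto
  have "has_derivs_on m a b g (\<lambda>j x. of_real (E j x))"
    using has_derivs_on_cong[OF _ DE, of g g] D by simp
  moreover from this have "has_derivs_on m a b (E 0) E"
    using has_derivs_on_cong[of a b g "\<lambda>x. of_real (E 0 x)" m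
        "\<lambda>j x. of_real (E j x)" "\<lambda>j x. of_real (E j x)"] g_E
    by (simp add: has_derivs_on_of_real_iff)
  ultimately show ?thesis using DE that by blast
qed

section \<open>Sign and quotients near a zero of finite order\<close>

lemma has_derivs_on_Suc:
  "has_derivs_on (Suc m) a b f D \<Longrightarrow> has_derivs_on m a b (D 1) (\<lambda>j. D (Suc j))"
  unfolding has_derivs_on_def by auto

lemma has_derivs_on_has_vector_derivative_at:
  assumes "has_derivs_on m a b f D" "j < m" "a < x" "x < b"
  shows "(D j has_vector_derivative D (Suc j) x) (at x)"
proof -
  have "(D j has_vector_derivative D (Suc j) x) (at x within {a..b})"
    using assms unfolding has_derivs_on_def by auto
  moreover have "at x within {a..b} = at x"
    using assms by (intro at_within_interior) auto
  ultimately show ?thesis by simp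
qed

lemma has_derivs_on_tendsto_at_left:
  assumes "has_derivs_on m a b f D" "a < b" "j \<le> m"
  shows "(D j \<longlongrightarrow> D j b) (at_left b)"
proof -
  have "continuous_on {a..b} (D j)"
    using assms unfolding has_derivs_on_def by auto
  then show ?thesis
    using assms(2) by (simp add: continuous_on_Icc_at_leftD)
qed

lemma has_derivs_on_mvt:
  fixes E :: "nat \<Rightarrow> real \<Rightarrow> real"
  assumes "has_derivs_on (Suc m) a b f E" "a \<le> x" "x < y" "y \<le> b"
  obtains \<xi> where "x < \<xi>" "\<xi> < y" "E 0 y - E 0 x = E 1 \<xi> * (y - x)"
proof -
  have "(E 0 has_derivative (*) (E 1 t)) (at t within {x..y})" if "x \<le> t" "t \<le> y" for t
  proof -
    have "(E 0 has_real_derivative E 1 t) (at t within {a..b})"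
      using assms that unfolding has_derivs_on_def
      by (auto simp: has_real_derivative_iff_has_vector_derivative)
    then show ?thesis
      using assms by (auto simp: has_field_derivative_def intro: has_derivative_subset)
  qed
  then show ?thesis
    using mvt_simple[OF \<open>x < y\<close>, of "E 0" "\<lambda>t. (*) (E 1 t)"] that by auto
qed

lemma zero_order_sign_at_left:
  fixes E :: "nat \<Rightarrow> real \<Rightarrow> real"
  assumes "has_derivs_on m a b f E" "a < b" "j \<le> m" "\<forall>i<j. E i b = 0" "E j b \<noteq> 0"
  shows "eventually (\<lambda>x. (-1)^j * E j b * E 0 x > 0) (at_left b)"
  using assms
proof (induction j arbitrary: m f E)
  case 0
  have "((\<lambda>x. E 0 b * E 0 x) \<longlongrightarrow> E 0 b * E 0 b) (at_left b)"
    using has_derivs_on_tendsto_at_left[OF "0.prems"(1,2)] by (intro tendsto_mult_left) simp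
  moreover have "E 0 b * E 0 b > 0"
    using "0.prems"(5) not_real_square_gt_zero by blast
  ultimately show ?case
    by (simp add: order_tendstoD(1))
next
  case (Suc j)
  then obtain m' where m: "m = Suc m'"
    by (cases m) auto
  have IH: "eventually (\<lambda>x. (-1)^j * E (Suc j) b * E 1 x > 0) (at_left b)"
    using Suc.IH[OF has_derivs_on_Suc[OF Suc.prems(1)[unfolded m]] Suc.prems(2)] Suc.prems(3-5) m
    by auto
  then obtain c where c: "c < b" "\<And>y. c < y \<Longrightarrow> y < b \<Longrightarrow> (-1)^j * E (Suc j) b * E 1 y > 0"
    unfolding eventually_at_left_field by blast
  show ?case
    unfolding eventually_at_left_field
  proof (intro exI[of _ "max a c"] conjI allI impI)
    fix x assume x: "max a c < x" "x < b"
    then obtain \<xi> where \<xi>: "x < \<xi>" "\<xi> < b" "E 0 b - E 0 x = E 1 \<xi> * (b - x)"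
      using has_derivs_on_mvt[OF Suc.prems(1)[unfolded m], of x b] by auto
    have "E 0 b = 0"
      using Suc.prems(4) by auto
    with \<xi>(3) have "E 0 x = - (E 1 \<xi> * (b - x))"
      by simp
    then have "(-1)^Suc j * E (Suc j) b * E 0 x = ((-1)^j * E (Suc j) b * E 1 \<xi>) * (b - x)"
      by simp
    moreover have "(-1)^j * E (Suc j) b * E 1 \<xi> > 0"
      using c(2)[of \<xi>] \<xi> x by simp
    ultimately show "(-1)^Suc j * E (Suc j) b * E 0 x > 0"
      using x by simp
  qed (use c Suc.prems(2) in auto)
qed

lemma zero_order_quotient_at_left:
  fixes E F :: "nat \<Rightarrow> real \<Rightarrow> real"
  assumes "has_derivs_on m a b f E" "has_derivs_on m a b g F" "a < b" "j \<le> m"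
    "\<forall>i<j. E i b = 0" "\<forall>i<j. F i b = 0" "F j b \<noteq> 0"
  shows "((\<lambda>x. E 0 x / F 0 x) \<longlongrightarrow> E j b / F j b) (at_left b)"
  using assms
proof (induction j arbitrary: m f g E F)
  case 0
  then show ?case
    by (intro tendsto_divide has_derivs_on_tendsto_at_left) auto
next
  case (Suc j)
  then obtain m' where m: "m = Suc m'"
    by (cases m) auto
  note E' = has_derivs_on_Suc[OF Suc.prems(1)[unfolded m]]
  note F' = has_derivs_on_Suc[OF Suc.prems(2)[unfolded m]]
  have interior: "eventually (\<lambda>x. a < x \<and> x < b) (at_left b)"
    using eventually_at_left_real[OF Suc.prems(3)] by simp
  show ?case
  proof (rule lhopital_left[where f'="E 1" and g'="F 1"])
    show "(E 0 \<longlongrightarrow> 0) (at_left b)" "(F 0 \<longlongrightarrow> 0) (at_left b)"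
      using has_derivs_on_tendsto_at_left[OF Suc.prems(1,3), of 0]
        has_derivs_on_tendsto_at_left[OF Suc.prems(2,3), of 0] Suc.prems(5,6) by auto
    show "eventually (\<lambda>x. F 0 x \<noteq> 0) (at_left b)"
      using zero_order_sign_at_left[OF Suc.prems(2,3,4,6,7)] by eventually_elim auto
    show "eventually (\<lambda>x. F 1 x \<noteq> 0) (at_left b)"
      using zero_order_sign_at_left[OF F' Suc.prems(3), of j] Suc.prems(4,6,7) m
      by (auto elim!: eventually_mono)
    show "eventually (\<lambda>x. DERIV (E 0) x :> E 1 x) (at_left b)"
      using interior by eventually_elim (use has_derivs_on_has_vector_derivative_at[OF Suc.prems(1), of 0] m
          in \<open>auto simp: has_real_derivative_iff_has_vector_derivative\<close>)
    show "eventually (\<lambda>x. DERIV (F 0) x :> F 1 x) (at_left b)"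
      using interior by eventually_elim (use has_derivs_on_has_vector_derivative_at[OF Suc.prems(2), of 0] m
          in \<open>auto simp: has_real_derivative_iff_has_vector_derivative\<close>)
    show "((\<lambda>x. E 1 x / F 1 x) \<longlongrightarrow> E (Suc j) b / F (Suc j) b) (at_left b)"
      using Suc.IH[OF E' F' Suc.prems(3)] Suc.prems(4-7) m by auto
  qed
qed

lemma filtermap_reflect_at_left: "filtermap (\<lambda>x. a + b - x) (at_left b) = at_right (a::real)"
proof -
  have "filtermap (\<lambda>x. a + b - x) (at_left b) = filtermap (\<lambda>x. x - (- a - b)) (at_right (- b))"
    by (subst at_left_minus) (simp add: filtermap_filtermap algebra_simps)
  also have "\<dots> = at_right a"
    by (simp add: filtermap_at_right_shift)
  finally show ?thesis .
qed

lemma has_derivs_on_reflect: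
  fixes E :: "nat \<Rightarrow> real \<Rightarrow> real"
  assumes "has_derivs_on m a b f E"
  shows "has_derivs_on m a b (\<lambda>x. f (a + b - x)) (\<lambda>j x. (-1)^j * E j (a + b - x))"
  unfolding has_derivs_on_def
proof (intro conjI allI impI ballI)
  have reflect_image: "(\<lambda>x. a + b - x) ` {a..b} = {a..b}"
    by (auto simp: image_iff intro!: bexI[of _ "a + b - x" for x])
  fix j x assume j: "j < m" and x: "x \<in> {a..b}"
  then have "(E j has_real_derivative E (Suc j) (a + b - x)) (at (a + b - x) within {a..b})"
    using assms unfolding has_derivs_on_def by (auto simp: has_real_derivative_iff_has_vector_derivative)
  moreover have "((\<lambda>x. a + b - x) has_real_derivative -1) (at x within {a..b})"
    by (auto intro!: derivative_eq_intros)
  ultimately have "(E j \<circ> (\<lambda>x. a + b - x) has_real_derivative E (Suc j) (a + b - x) * -1)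
      (at x within {a..b})"
    using DERIV_image_chain reflect_image by metis
  from DERIV_cmult[OF this, of "(-1)^j"]
  show "((\<lambda>x. (-1)^j * E j (a + b - x)) has_vector_derivative (-1)^Suc j * E (Suc j) (a + b - x))
      (at x within {a..b})"
    by (simp add: o_def has_real_derivative_iff_has_vector_derivative)
next
  fix j assume "j \<le> m"
  then have "continuous_on {a..b} (E j)"
    using assms unfolding has_derivs_on_def by auto
  then have "continuous_on {a..b} (\<lambda>x. E j (a + b - x))"
    by (rule continuous_on_compose2) (auto intro!: continuous_intros)
  then show "continuous_on {a..b} (\<lambda>x. (-1)^j * E j (a + b - x))"
    by (rule continuous_on_mult_left)
qed (use assms in \<open>auto simp: has_derivs_on_def\<close>)

lemma eventually_at_right_iff_reflect:
  "eventually P (at_right a) \<longleftrightarrow> eventually (\<lambda>x. P (a + b - x)) (at_left (b::real))"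
  using eventually_filtermap[of P "\<lambda>x. a + b - x" "at_left b"] by (simp add: filtermap_reflect_at_left)

lemma zero_order_sign_at_right:
  fixes E :: "nat \<Rightarrow> real \<Rightarrow> real"
  assumes "has_derivs_on m a b f E" "a < b" "j \<le> m" "\<forall>i<j. E i a = 0" "E j a \<noteq> 0"
  shows "eventually (\<lambda>x. E j a * E 0 x > 0) (at_right a)"
proof -
  have "eventually (\<lambda>x. (-1)^j * ((-1)^j * E j a) * E 0 (a + b - x) > 0) (at_left b)"
    using zero_order_sign_at_left[OF has_derivs_on_reflect[OF assms(1)] assms(2,3)] assms(4,5)
    by simp
  then show ?thesis
    by (simp add: eventually_at_right_iff_reflect[of _ a b] flip: power_add mult.assoc)
qed

lemma zero_order_quotient_at_right:
  fixes E F :: "nat \<Rightarrow> real \<Rightarrow> real"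
  assumes "has_derivs_on m a b f E" "has_derivs_on m a b g F" "a < b" "j \<le> m"
    "\<forall>i<j. E i a = 0" "\<forall>i<j. F i a = 0" "F j a \<noteq> 0"
  shows "((\<lambda>x. E 0 x / F 0 x) \<longlongrightarrow> E j a / F j a) (at_right a)"
proof -
  have "((\<lambda>x. E 0 (a + b - x) / F 0 (a + b - x)) \<longlongrightarrow> ((-1)^j * E j a) / ((-1)^j * F j a)) (at_left b)"
    using zero_order_quotient_at_left[OF has_derivs_on_reflect[OF assms(1)]
        has_derivs_on_reflect[OF assms(2)] assms(3,4)] assms(5-7) by simp
  then show ?thesis
    by (simp add: filterlim_filtermap flip: filtermap_reflect_at_left[of a b])
qed

lemma leading_derivative_pos_at_left:
  fixes E :: "nat \<Rightarrow> real \<Rightarrow> real"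
  assumes "has_derivs_on m a b f E" "a < b" "j \<le> m" "\<forall>i<j. E i b = 0" "E j b \<noteq> 0"
    and "eventually (\<lambda>x. E 0 x \<ge> 0) (at_left b)"
  shows "(-1)^j * E j b > 0"
proof -
  have "eventually (\<lambda>x. (-1)^j * E j b * E 0 x > 0 \<and> E 0 x \<ge> 0) (at_left b)"
    using zero_order_sign_at_left[OF assms(1-5)] assms(6) by (rule eventually_conj)
  then obtain x where "(-1)^j * E j b * E 0 x > 0" "E 0 x \<ge> 0"
    using eventually_happens'[of "at_left b"] by auto
  then show ?thesis
    by (auto simp: zero_less_mult_iff)
qed

lemma leading_derivative_pos_at_right:
  fixes E :: "nat \<Rightarrow> real \<Rightarrow> real"
  assumes "has_derivs_on m a b f E" "a < b" "j \<le> m" "\<forall>i<j. E i a = 0" "E j a \<noteq> 0"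
    and "eventually (\<lambda>x. E 0 x \<ge> 0) (at_right a)"
  shows "E j a > 0"
proof -
  have "eventually (\<lambda>x. E j a * E 0 x > 0 \<and> E 0 x \<ge> 0) (at_right a)"
    using zero_order_sign_at_right[OF assms(1-5)] assms(6) by (rule eventually_conj)
  then obtain x where "E j a * E 0 x > 0" "E 0 x \<ge> 0"
    using eventually_happens'[of "at_right a"] by auto
  then show ?thesis
    by (auto simp: zero_less_mult_iff)
qed

lemma first_derivative_neg_at_left:
  fixes E :: "nat \<Rightarrow> real \<Rightarrow> real"
  assumes "has_derivs_on m a b f E" "a < b" "0 < j" "j \<le> m" "\<forall>i<j. E i b = 0" "(-1)^j * E j b > 0"
  shows "eventually (\<lambda>x. E 1 x < 0) (at_left b)"
proof -
  obtain m' j' where m: "m = Suc m'" and j: "j = Suc j'"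
    using assms(3,4) by (metis Suc_pred' less_le_trans)
  have neg: "(-1)^j' * E j b < 0"
    using assms(6) j by simp
  then have "E j b \<noteq> 0"
    by auto
  then have "eventually (\<lambda>x. (-1)^j' * E j b * E 1 x > 0) (at_left b)"
    using zero_order_sign_at_left[OF has_derivs_on_Suc[OF assms(1)[unfolded m]] assms(2), of j']
      assms(4,5) m j by auto
  then show ?thesis
  proof (rule eventually_mono)
    fix x assume "(-1)^j' * E j b * E 1 x > 0"
    with neg show "E 1 x < 0"
      by (metis not_le mult_nonpos_nonneg less_imp_le)
  qed
qed

lemma first_derivative_pos_at_right:
  fixes E :: "nat \<Rightarrow> real \<Rightarrow> real"
  assumes "has_derivs_on m a b f E" "a < b" "0 < j" "j \<le> m" "\<forall>i<j. E i a = 0" "E j a > 0"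
  shows "eventually (\<lambda>x. E 1 x > 0) (at_right a)"
proof -
  obtain m' j' where m: "m = Suc m'" and j: "j = Suc j'"
    using assms(3,4) by (metis Suc_pred' less_le_trans)
  have "eventually (\<lambda>x. E j a * E 1 x > 0) (at_right a)"
    using zero_order_sign_at_right[OF has_derivs_on_Suc[OF assms(1)[unfolded m]] assms(2), of j']
      assms(4-6) m j by auto
  then show ?thesis
    by (rule eventually_mono) (use assms(6) in \<open>simp add: zero_less_mult_iff\<close>)
qed

section \<open>Bernstein bases\<close>

lemma zero_of_order_real_valuedE:
  fixes g :: "real \<Rightarrow> 'a::real_normed_div_algebra"
  assumes "zero_of_order m a b g c j" "a < b" "c \<in> {a..b}" "\<forall>x\<in>{a..b}. g x \<in> \<real>"
  obtains E where "has_derivs_on m a b g (\<lambda>j x. of_real (E j x))" "has_derivs_on m a b (E 0) E"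
    "j \<le> m" "\<forall>i<j. E i c = 0" "E j c \<noteq> 0"
proof -
  obtain D where D: "has_derivs_on m a b g D" "\<forall>i<j. D i c = 0" "D j c \<noteq> 0" "j \<le> m"
    using assms(1) unfolding zero_of_order_def by blast
  obtain E where E: "\<forall>i\<le>m. \<forall>x\<in>{a..b}. D i x = of_real (E i x)"
    "has_derivs_on m a b g (\<lambda>j x. of_real (E j x))" "has_derivs_on m a b (E 0) E"
    using has_derivs_on_real_valuedE[OF D(1) assms(2,4)] .
  have "\<forall>i<j. E i c = 0" "E j c \<noteq> 0"
    using D E(1) assms(3) by auto
  with E(2,3) D(4) show ?thesis
    by (rule that)
qed

lemma locally_nonneg_eventually:
  assumes "locally_nonneg m a b P" "a < b" "k \<le> m"
  shows "eventually (\<lambda>x. x \<in> {a..b} \<and> (\<exists>r\<ge>0. P k x = of_real r)) (at_right a)"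
    and "eventually (\<lambda>x. x \<in> {a..b} \<and> (\<exists>r\<ge>0. P k x = of_real r)) (at_left b)"
proof -
  obtain \<delta> where "\<delta> > 0"
    and nonneg: "\<forall>x\<in>{a..b}. (x < a + \<delta> \<or> b - \<delta> < x) \<longrightarrow> (\<exists>r\<ge>0. P k x = of_real r)"
    using assms(1,3) unfolding locally_nonneg_def by blast
  show "eventually (\<lambda>x. x \<in> {a..b} \<and> (\<exists>r\<ge>0. P k x = of_real r)) (at_right a)"
    unfolding eventually_at_right_field
    using \<open>\<delta> > 0\<close> assms(2) nonneg by (intro exI[of _ "min (a + \<delta>) b"]) auto
  show "eventually (\<lambda>x. x \<in> {a..b} \<and> (\<exists>r\<ge>0. P k x = of_real r)) (at_left b)"
    unfolding eventually_at_left_field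
    using \<open>\<delta> > 0\<close> assms(2) nonneg by (intro exI[of _ "max (b - \<delta>) a"]) auto
qed

lemma has_derivs_on_of_real_nonneg:
  fixes g :: "real \<Rightarrow> 'a::real_normed_algebra_1"
  assumes "has_derivs_on m a b g (\<lambda>j x. of_real (E j x))"
  shows "x \<in> {a..b} \<and> (\<exists>r\<ge>0. g x = of_real r) \<Longrightarrow> E 0 x \<ge> 0"
proof (elim conjE exE)
  fix r :: real assume "x \<in> {a..b}" "r \<ge> 0" "g x = of_real r"
  moreover have "g x = of_real (E 0 x)"
    using assms \<open>x \<in> {a..b}\<close> unfolding has_derivs_on_def by auto
  ultimately show "E 0 x \<ge> 0"
    by simp
qed

lemma bernstein_basis_real_derivs_at_a:
  fixes P :: "nat \<Rightarrow> real \<Rightarrow> 'a::real_normed_div_algebra"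
  assumes "bernstein_basis m a b V P" "locally_nonneg m a b P" "a < b" "k \<le> m"
  obtains E where "has_derivs_on m a b (P k) (\<lambda>j x. of_real (E j x))" "has_derivs_on m a b (E 0) E"
    "\<forall>i<k. E i a = 0" "E k a > 0"
proof -
  have "zero_of_order m a b (P k) a k" "\<forall>x\<in>{a..b}. P k x \<in> \<real>"
    using assms unfolding bernstein_basis_def locally_nonneg_def by auto
  then obtain E where E: "has_derivs_on m a b (P k) (\<lambda>j x. of_real (E j x))" "has_derivs_on m a b (E 0) E"
    "\<forall>i<k. E i a = 0" "E k a \<noteq> 0"
    using zero_of_order_real_valuedE[of m a b "P k" a k] assms(3)
    by (metis atLeastAtMost_iff order_refl less_imp_le)
  have "eventually (\<lambda>x. E 0 x \<ge> 0) (at_right a)"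
    using locally_nonneg_eventually(1)[OF assms(2-4)]
    by (rule eventually_mono) (rule has_derivs_on_of_real_nonneg[OF E(1)])
  with E assms(3,4) show ?thesis
    using leading_derivative_pos_at_right that by blast
qed

lemma bernstein_basis_real_derivs_at_b:
  fixes P :: "nat \<Rightarrow> real \<Rightarrow> 'a::real_normed_div_algebra"
  assumes "bernstein_basis m a b V P" "locally_nonneg m a b P" "a < b" "k \<le> m"
  obtains E where "has_derivs_on m a b (P k) (\<lambda>j x. of_real (E j x))" "has_derivs_on m a b (E 0) E"
    "\<forall>i<m-k. E i b = 0" "(-1)^(m-k) * E (m-k) b > 0"
proof -
  have "zero_of_order m a b (P k) b (m-k)" "\<forall>x\<in>{a..b}. P k x \<in> \<real>"
    using assms unfolding bernstein_basis_def locally_nonneg_def by auto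
  then obtain E where E: "has_derivs_on m a b (P k) (\<lambda>j x. of_real (E j x))" "has_derivs_on m a b (E 0) E"
    "\<forall>i<m-k. E i b = 0" "E (m-k) b \<noteq> 0"
    using zero_of_order_real_valuedE[of m a b "P k" b "m-k"] assms(3) by auto
  have "eventually (\<lambda>x. E 0 x \<ge> 0) (at_left b)"
    using locally_nonneg_eventually(2)[OF assms(2-4)]
    by (rule eventually_mono) (rule has_derivs_on_of_real_nonneg[OF E(1)])
  with E assms(3) show ?thesis
    using leading_derivative_pos_at_left[of m a b "E 0" E "m-k"] that by auto
qed

lemma has_derivs_on_vector_derivative_at:
  assumes "has_derivs_on m a b g D" "0 < m" "a < x" "x < b"
  shows "(g has_vector_derivative D 1 x) (at x)"
proof (rule has_vector_derivative_transform_within_open[of "D 0" _ _ "{a<..<b}"])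
  show "(D 0 has_vector_derivative D 1 x) (at x)"
    using has_derivs_on_has_vector_derivative_at[OF assms(1,2,3,4)] by simp
  show "\<And>y. y \<in> {a<..<b} \<Longrightarrow> D 0 y = g y"
    using assms(1) unfolding has_derivs_on_def by auto
qed (use assms in auto)

lemma bernstein_basis_derivative_pos_at_a:
  fixes P :: "nat \<Rightarrow> real \<Rightarrow> 'a::real_normed_div_algebra"
  assumes "bernstein_basis m a b V P" "locally_nonneg m a b P" "a < b" "k \<in> {1..m}"
  shows "eventually (\<lambda>x. \<exists>d. (P k has_vector_derivative of_real d) (at x) \<and> d > 0) (at_right a)"
proof -
  obtain E where E: "has_derivs_on m a b (P k) (\<lambda>j x. of_real (E j x))" "has_derivs_on m a b (E 0) E"
    "\<forall>i<k. E i a = 0" "E k a > 0"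
    using bernstein_basis_real_derivs_at_a[OF assms(1-3), of k] assms(4) by auto
  have "eventually (\<lambda>x. E 1 x > 0) (at_right a)"
    using first_derivative_pos_at_right[OF E(2) assms(3), of k] E(3,4) assms(4) by auto
  moreover have "eventually (\<lambda>x. a < x \<and> x < b) (at_right a)"
    using eventually_at_right_real[OF assms(3)] by simp
  ultimately show ?thesis
    by eventually_elim (use has_derivs_on_vector_derivative_at[OF E(1)] assms(4) in auto)
qed

lemma bernstein_basis_derivative_neg_at_b:
  fixes P :: "nat \<Rightarrow> real \<Rightarrow> 'a::real_normed_div_algebra"
  assumes "bernstein_basis m a b V P" "locally_nonneg m a b P" "a < b" "k < m"
  shows "eventually (\<lambda>x. \<exists>d. (P k has_vector_derivative of_real d) (at x) \<and> d < 0) (at_left b)"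
proof -
  obtain E where E: "has_derivs_on m a b (P k) (\<lambda>j x. of_real (E j x))" "has_derivs_on m a b (E 0) E"
    "\<forall>i<m-k. E i b = 0" "(-1)^(m-k) * E (m-k) b > 0"
    using bernstein_basis_real_derivs_at_b[OF assms(1-3), of k] assms(4) by auto
  have "eventually (\<lambda>x. E 1 x < 0) (at_left b)"
    using first_derivative_neg_at_left[OF E(2) assms(3), of "m-k"] E(3,4) assms(4) by auto
  moreover have "eventually (\<lambda>x. a < x \<and> x < b) (at_left b)"
    using eventually_at_left_real[OF assms(3)] by simp
  ultimately show ?thesis
    by eventually_elim (use has_derivs_on_vector_derivative_at[OF E(1)] assms(4) in auto)
qed

lemma tendsto_vector_derivative_quotient:
  fixes g h :: "real \<Rightarrow> 'a::real_normed_field"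
  assumes "has_derivs_on m a b g (\<lambda>j x. of_real (E j x))" "0 < m"
    and "has_derivs_on n a b h (\<lambda>j x. of_real (G j x))"
    and "eventually (\<lambda>x. a < x \<and> x < b) F" "((\<lambda>x. E 1 x / G 0 x) \<longlongrightarrow> L) F"
  shows "((\<lambda>x. vector_derivative g (at x) / h x) \<longlongrightarrow> of_real L) F"
proof (rule Lim_transform_eventually)
  show "((\<lambda>x. of_real (E 1 x / G 0 x) :: 'a) \<longlongrightarrow> of_real L) F"
    using assms(5) by (rule tendsto_of_real)
  show "eventually (\<lambda>x. (of_real (E 1 x / G 0 x) :: 'a) = vector_derivative g (at x) / h x) F"
    using assms(4)
  proof (rule eventually_mono)
    fix x assume x: "a < x \<and> x < b"
    then have "vector_derivative g (at x) = of_real (E 1 x)"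
      using has_derivs_on_vector_derivative_at[OF assms(1,2)] by (auto intro: vector_derivative_at)
    moreover have "h x = of_real (G 0 x)"
      using assms(3) x unfolding has_derivs_on_def by auto
    ultimately show "(of_real (E 1 x / G 0 x) :: 'a) = vector_derivative g (at x) / h x"
      by (simp add: of_real_divide)
  qed
qed

lemma bernstein_basis_derivative_quotient_at_a:
  fixes P Q :: "nat \<Rightarrow> real \<Rightarrow> 'a::real_normed_field"
  assumes "bernstein_basis m a b V P" "locally_nonneg m a b P"
    and "bernstein_basis (m - 1) a b W Q" "locally_nonneg (m - 1) a b Q"
    and "a < b" "k \<in> {1..m}"
  shows "\<exists>L>0. ((\<lambda>x. vector_derivative (P k) (at x) / Q (k - 1) x) \<longlongrightarrow> of_real L) (at_right a)"
proof -
  obtain m' where m: "m = Suc m'"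
    using assms(6) by (cases m) auto
  obtain E where E: "has_derivs_on m a b (P k) (\<lambda>j x. of_real (E j x))" "has_derivs_on m a b (E 0) E"
    "\<forall>i<k. E i a = 0" "E k a > 0"
    using bernstein_basis_real_derivs_at_a[OF assms(1,2,5), of k] assms(6) by auto
  have "k - 1 \<le> m - 1"
    using assms(6) diff_le_mono by auto
  then obtain G where G: "has_derivs_on m' a b (Q (k - 1)) (\<lambda>j x. of_real (G j x))"
    "has_derivs_on m' a b (G 0) G" "\<forall>i<k-1. G i a = 0" "G (k-1) a > 0"
    using bernstein_basis_real_derivs_at_a[OF assms(3,4,5)] m by auto
  have lim: "((\<lambda>x. E 1 x / G 0 x) \<longlongrightarrow> E k a / G (k - 1) a) (at_right a)"
    using zero_order_quotient_at_right[OF has_derivs_on_Suc[OF E(2)[unfolded m]] G(2) assms(5), of "k - 1"]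
      E(3) G(3,4) assms(6) m by auto
  have "((\<lambda>x. vector_derivative (P k) (at x) / Q (k - 1) x) \<longlongrightarrow> of_real (E k a / G (k - 1) a))
      (at_right a)"
    by (rule tendsto_vector_derivative_quotient[OF E(1) _ G(1) _ lim])
      (use m eventually_at_right_real[OF assms(5)] in auto)
  moreover have "E k a / G (k - 1) a > 0"
    using E(4) G(4) by simp
  ultimately show ?thesis
    by blast
qed

lemma bernstein_basis_derivative_quotient_at_b:
  fixes P Q :: "nat \<Rightarrow> real \<Rightarrow> 'a::real_normed_field"
  assumes "bernstein_basis m a b V P" "locally_nonneg m a b P"
    and "bernstein_basis (m - 1) a b W Q" "locally_nonneg (m - 1) a b Q"
    and "a < b" "k < m"
  shows "\<exists>L<0. ((\<lambda>x. vector_derivative (P k) (at x) / Q k x) \<longlongrightarrow> of_real L) (at_left b)"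
proof -
  obtain m' where m: "m = Suc m'"
    using assms(6) by (cases m) auto
  then have mk: "m - k = Suc (m' - k)"
    using assms(6) by simp
  obtain E where E: "has_derivs_on m a b (P k) (\<lambda>j x. of_real (E j x))" "has_derivs_on m a b (E 0) E"
    "\<forall>i<m-k. E i b = 0" "(-1)^(m-k) * E (m-k) b > 0"
    using bernstein_basis_real_derivs_at_b[OF assms(1,2,5), of k] assms(6) by auto
  obtain G where G: "has_derivs_on m' a b (Q k) (\<lambda>j x. of_real (G j x))"
    "has_derivs_on m' a b (G 0) G" "\<forall>i<m'-k. G i b = 0" "(-1)^(m'-k) * G (m'-k) b > 0"
    using bernstein_basis_real_derivs_at_b[OF assms(3,4,5), of k] assms(6) m by auto
  have "G (m' - k) b \<noteq> 0"
    using G(4) by (metis mult_zero_right less_irrefl)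
  then have lim: "((\<lambda>x. E 1 x / G 0 x) \<longlongrightarrow> E (m - k) b / G (m' - k) b) (at_left b)"
    using zero_order_quotient_at_left[OF has_derivs_on_Suc[OF E(2)[unfolded m]] G(2) assms(5), of "m' - k"]
      E(3) G(3,4) mk by auto
  have "((\<lambda>x. vector_derivative (P k) (at x) / Q k x) \<longlongrightarrow> of_real (E (m - k) b / G (m' - k) b))
      (at_left b)"
    by (rule tendsto_vector_derivative_quotient[OF E(1) _ G(1) _ lim])
      (use m eventually_at_left_real[OF assms(5)] in auto)
  moreover have "E (m - k) b / G (m' - k) b < 0"
    using E(4) G(4) unfolding mk
    by (cases "even (m' - k)") (auto simp: divide_less_0_iff zero_less_mult_iff)
  ultimately show ?thesis
    by blast
qed

lemma eventually_at_left_at_right_obtain_delta: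
  fixes a b :: real
  assumes "eventually P (at_left b)" "eventually Q (at_right a)"
  obtains \<delta> where "\<delta> > 0" "\<And>x. b - \<delta> \<le> x \<Longrightarrow> x < b \<Longrightarrow> P x"
    "\<And>x. a < x \<Longrightarrow> x \<le> a + \<delta> \<Longrightarrow> Q x"
proof -
  obtain c c' where c: "c < b" "\<And>x. c < x \<Longrightarrow> x < b \<Longrightarrow> P x"
    and c': "a < c'" "\<And>x. a < x \<Longrightarrow> x < c' \<Longrightarrow> Q x"
    using assms unfolding eventually_at_left_field eventually_at_right_field by blast
  define \<delta> where "\<delta> = min (b - c) (c' - a) / 2"
  have \<delta>: "\<delta> > 0" "\<delta> < b - c" "\<delta> < c' - a"
    using c(1) c'(1) unfolding \<delta>_def by auto
  show ?thesis
  proof (rule that[OF \<delta>(1)])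
    show "P x" if "b - \<delta> \<le> x" "x < b" for x
      using c(2) that \<delta> by auto
    show "Q x" if "a < x" "x \<le> a + \<delta>" for x
      using c'(2) that \<delta> by auto
  qed
qed

lemma bernstein_basis_derivative_signs_near_endpoints:
  fixes P :: "nat \<Rightarrow> real \<Rightarrow> 'a::real_normed_div_algebra"
  assumes "bernstein_basis m a b V P" "locally_nonneg m a b P" "a < b"
  obtains \<delta> where "\<delta> > 0"
    "\<And>k x. k < m \<Longrightarrow> b - \<delta> \<le> x \<Longrightarrow> x < b \<Longrightarrow>
      \<exists>d. (P k has_vector_derivative of_real d) (at x) \<and> d < 0"
    "\<And>k x. k \<in> {1..m} \<Longrightarrow> a < x \<Longrightarrow> x \<le> a + \<delta> \<Longrightarrow>
      \<exists>d. (P k has_vector_derivative of_real d) (at x) \<and> d > 0"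
proof -
  have "eventually (\<lambda>x. \<forall>k\<in>{..<m}. \<exists>d. (P k has_vector_derivative of_real d) (at x) \<and> d < 0)
      (at_left b)"
    using bernstein_basis_derivative_neg_at_b[OF assms] by (simp add: eventually_ball_finite)
  moreover have "eventually (\<lambda>x. \<forall>k\<in>{1..m}. \<exists>d. (P k has_vector_derivative of_real d) (at x) \<and> d > 0)
      (at_right a)"
    using bernstein_basis_derivative_pos_at_a[OF assms] by (simp add: eventually_ball_finite)
  ultimately show ?thesis
    by (rule eventually_at_left_at_right_obtain_delta) (use that in auto)
qed

theorem lemma6:
  fixes a b :: real and n :: nat
    and U :: "(real \<Rightarrow> 'a::real_normed_field) set"
    and P :: "nat \<Rightarrow> real \<Rightarrow> 'a"
  assumes ab: "a < b"
    and U_Cn: "\<forall>f\<in>U. Cm_on n a b f"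
    and U_sub: "fun_subspace U"
    and U_dim: "dim_on a b U (n + 1)"
    and P_bern: "bernstein_basis n a b U P"
    and P_nonneg: "locally_nonneg n a b P"
  shows "(\<exists>\<delta>>0.
            (\<forall>k<n. \<forall>x\<in>{a..b}. b - \<delta> \<le> x \<and> x < b \<longrightarrow>
               (\<exists>d::real. (P k has_vector_derivative of_real d) (at x within {a..b}) \<and> d < 0)) \<and>
            (\<forall>k\<in>{1..n}. \<forall>x\<in>{a..b}. a < x \<and> x \<le> a + \<delta> \<longrightarrow>
               (\<exists>d::real. (P k has_vector_derivative of_real d) (at x within {a..b}) \<and> d > 0)))
       \<and> (\<forall>(f0::real \<Rightarrow> real) (Q::nat \<Rightarrow> real \<Rightarrow> 'a).
            (\<lambda>x. of_real (f0 x)) \<in> U \<and> (\<forall>x\<in>{a..b}. f0 x > 0) \<and>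
            bernstein_basis (n - 1) a b (D_op a b f0 U) Q \<and> locally_nonneg (n - 1) a b Q
            \<longrightarrow>
            (\<forall>k\<in>{1..n}. \<exists>L::real.
               ((\<lambda>x. vector_derivative (P k) (at x) / Q (k - 1) x) \<longlongrightarrow> of_real L) (at_right a)
               \<and> L / f0 a > 0) \<and>
            (\<forall>k<n. \<exists>L::real.
               ((\<lambda>x. vector_derivative (P k) (at x) / Q k x) \<longlongrightarrow> of_real L) (at_left b)
               \<and> L / f0 b < 0))"
proof ((intro conjI allI impI ballI; (elim conjE)?), goal_cases)
  case 1
  obtain \<delta> where "\<delta> > 0"
    "\<And>k x. k < n \<Longrightarrow> b - \<delta> \<le> x \<Longrightarrow> x < b \<Longrightarrow>
      \<exists>d. (P k has_vector_derivative of_real d) (at x) \<and> d < 0"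
    "\<And>k x. k \<in> {1..n} \<Longrightarrow> a < x \<Longrightarrow> x \<le> a + \<delta> \<Longrightarrow>
      \<exists>d. (P k has_vector_derivative of_real d) (at x) \<and> d > 0"
    using bernstein_basis_derivative_signs_near_endpoints[OF P_bern P_nonneg ab] by metis
  then show ?case
    by (blast intro: has_vector_derivative_at_within)
next
  case (2 f0 Q k)
  then have "f0 a > 0"
    using ab by auto
  then show ?case
    using bernstein_basis_derivative_quotient_at_a[OF P_bern P_nonneg
        \<open>bernstein_basis (n - 1) a b (D_op a b f0 U) Q\<close> \<open>locally_nonneg (n - 1) a b Q\<close> ab
        \<open>k \<in> {1..n}\<close>]
    by (blast intro: divide_pos_pos)
next
  case (3 f0 Q k)
  then have "f0 b > 0"
    using ab by auto
  then show ?case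
    using bernstein_basis_derivative_quotient_at_b[OF P_bern P_nonneg
        \<open>bernstein_basis (n - 1) a b (D_op a b f0 U) Q\<close> \<open>locally_nonneg (n - 1) a b Q\<close> ab
        \<open>k < n\<close>]
    by (blast intro: divide_neg_pos)
qed

end
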